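(* Let $\chi:\mathbb{R}_+\to\mathbb{R}$ be a Lipschitz function. The function $X:\mathcal Q_2(\mathbb{R}_+)\to\mathbb{R}$, $X(\mathsf q)=\int_0^1\chi(\mathsf q(u))\,\mathrm du$, is $\mathcal Q_2(\mathbb{R}_+)^*$-nondecreasing if and only if $\chi$ is nondecreasing and convex.
   Context: $\mathcal Q_2(\mathbb{R}_+)$ is the set of nondecreasing, right-continuous (with left limits) functions $\mathsf q:[0,1)\to\mathbb{R}_+$ that belong to $L^2([0,1),\mathbb{R})$. Its dual cone is $\mathcal Q_2(\mathbb{R}_+)^*=\{\mathsf p\in L^2([0,1),\mathbb{R}):\langle\mathsf p,\mathsf q\rangle_{L^2}\ge0$ for all $\mathsf q\in\mathcal Q_2(\mathbb{R}_+)\}$. A function $\mathsf g:\mathcal Q_2(\mathbb{R}_+)\to\mathbb{R}$ is $\mathcal Q_2(\mathbb{R}_+)^*$-nondecreasing if $\mathsf g(\mathsf q)\le\mathsf g(\mathsf q')$ whenever $\mathsf q,\mathsf q'\in\mathcal Q_2(\mathbb{R}_+)$ and $\mathsf q'-\mathsf q\in\mathcal Q_2(\mathbb{R}_+)^*$. *)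

theory Defs
  imports "HOL-Analysis.Analysis"
begin

text \<open>Functions on [0,1) are represented as real => real; only values on [0,1) matter.\<close>

definition L2_01 :: "(real \<Rightarrow> real) \<Rightarrow> bool" where
  "L2_01 f \<longleftrightarrow> set_borel_measurable lebesgue {0..<1} f
      \<and> set_integrable lebesgue {0..<1} (\<lambda>u. (f u)\<^sup>2)"

definition L2_inner :: "(real \<Rightarrow> real) \<Rightarrow> (real \<Rightarrow> real) \<Rightarrow> real" where
  "L2_inner p q = (LINT u:{0..<1}|lebesgue. p u * q u)"

text \<open>Q_2(R_+): nondecreasing, right-continuous, nonnegative, square-integrable on [0,1).
  Left limits exist automatically for nondecreasing functions.\<close>
definition Q2 :: "(real \<Rightarrow> real) set" where
  "Q2 = {q. (\<forall>u\<in>{0..<1}. 0 \<le> q u)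
          \<and> mono_on {0..<1} q
          \<and> (\<forall>u\<in>{0..<1}. continuous (at_right u) q)
          \<and> L2_01 q}"

definition Q2_dual :: "(real \<Rightarrow> real) set" where
  "Q2_dual = {p. L2_01 p \<and> (\<forall>q\<in>Q2. 0 \<le> L2_inner p q)}"

definition Q2_dual_nondecreasing :: "((real \<Rightarrow> real) \<Rightarrow> real) \<Rightarrow> bool" where
  "Q2_dual_nondecreasing g \<longleftrightarrow>
     (\<forall>q\<in>Q2. \<forall>q'\<in>Q2. (\<lambda>u. q' u - q u) \<in> Q2_dual \<longrightarrow> g q \<le> g q')"

end

theory Submission
  imports Defs
begin

(* Sufficiency: for h > 0 the difference quotient g = (chi (. + h) - chi) / h of a nondecreasing,
   convex, L-Lipschitz chi is continuous, nondecreasing and takes values in [0, L], so g o q lies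
   in Q2 for every q in Q2. Convexity gives chi q' - chi q >= (q' - q) g(q) - L h pointwise;
   integrating, and using that q' - q is in the dual cone, the integral of chi o q exceeds that of
   chi o q' by at most L h; now let h -> 0.
   Necessity: two constants x <= y differ by an element of the dual cone, which gives
   monotonicity. A step function with values x < y differs from the constant equal to its mean by
   a function of mean zero that changes sign once from nonpositive to nonnegative; such a
   function pairs nonnegatively with every nondecreasing nonnegative q, and comparing the two
   integrals of chi gives convexity. *)

lemma set_borel_measurable_restrict_space_iff:
  fixes f :: "'a \<Rightarrow> 'b::real_normed_vector"
  assumes "A \<in> sets M"
  shows "set_borel_measurable M A f \<longleftrightarrow> f \<in> borel_measurable (restrict_space M A)"
  using assms by (simp add: set_borel_measurable_def borel_measurable_restrict_space_iff)

lemma set_borel_measurable_compose_continuous_on: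
  fixes f :: "'a \<Rightarrow> 'b::real_normed_vector" and g :: "'b \<Rightarrow> 'c::real_normed_vector"
  assumes f: "set_borel_measurable M A f" and A: "A \<in> sets M"
    and g: "continuous_on S g" and fS: "f ` A \<subseteq> S"
  shows "set_borel_measurable M A (\<lambda>x. g (f x))"
proof -
  have "f \<in> measurable (restrict_space M A) (restrict_space borel S)"
    using f fS A by (intro measurable_restrict_space2)
      (auto simp: set_borel_measurable_restrict_space_iff space_restrict_space)
  then have "(\<lambda>x. g (f x)) \<in> borel_measurable (restrict_space M A)"
    using borel_measurable_continuous_on_restrict[OF g] by (rule measurable_compose)
  then show ?thesis using A by (simp add: set_borel_measurable_restrict_space_iff)
qed

lemma set_borel_measurable_mult:
  fixes f g :: "'a \<Rightarrow> real"
  assumes "set_borel_measurable M A f" "set_borel_measurable M A g" "A \<in> sets M"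
  shows "set_borel_measurable M A (\<lambda>x. f x * g x)"
  using assms by (simp add: set_borel_measurable_restrict_space_iff)

lemma borel_measurable_imp_set_borel_measurable:
  fixes f :: "'a \<Rightarrow> 'b::real_normed_vector"
  assumes "f \<in> borel_measurable M" "A \<in> sets M"
  shows "set_borel_measurable M A f"
  using assms by (simp add: set_borel_measurable_restrict_space_iff measurable_restrict_space1)

lemma set_integrable_bounded:
  fixes f :: "'a \<Rightarrow> 'b::{banach, second_countable_topology}"
  assumes "set_borel_measurable M A f" "A \<in> sets M" "emeasure M A < \<infinity>"
    and "\<And>x. x \<in> A \<Longrightarrow> norm (f x) \<le> B"
  shows "set_integrable M A f"
  unfolding set_integrable_def
  using assms by (intro integrableI_bounded_set[where A = A and B = B])
    (auto simp: set_borel_measurable_def)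

lemma set_integrable_const:
  fixes c :: "'b::{banach, second_countable_topology}"
  assumes "A \<in> sets M" "emeasure M A < \<infinity>"
  shows "set_integrable M A (\<lambda>_. c)"
  using assms
  by (intro set_integrable_bounded[where B = "norm c"] borel_measurable_imp_set_borel_measurable) auto

lemma set_integrable_bounded_mult:
  fixes f g :: "'a \<Rightarrow> real"
  assumes f: "set_integrable M A f" and g: "set_borel_measurable M A g" "A \<in> sets M"
    and bound: "\<And>x. x \<in> A \<Longrightarrow> \<bar>g x\<bar> \<le> B"
  shows "set_integrable M A (\<lambda>x. g x * f x)"
proof (rule set_integrable_bound)
  show "set_integrable M A (\<lambda>x. B * f x)" using f by simp
  show "set_borel_measurable M A (\<lambda>x. g x * f x)"
    using f g by (intro set_borel_measurable_mult) (auto simp: set_borel_measurable_def set_integrable_def)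
  show "AE x in M. x \<in> A \<longrightarrow> norm (g x * f x) \<le> norm (B * f x)"
  proof (intro AE_I2 impI)
    fix x assume "x \<in> A"
    then have "\<bar>g x\<bar> \<le> \<bar>B\<bar>" using bound by force
    then show "norm (g x * f x) \<le> norm (B * f x)" by (simp add: abs_mult mult_right_mono)
  qed
qed

lemma L2_01_imp_set_integrable:
  assumes "L2_01 f"
  shows "set_integrable lebesgue {0..<1} f"
proof -
  interpret finite_measure "lebesgue_on {0..<1::real}"
    by (rule finite_measure_lebesgue_on) (simp add: fmeasurable_def)
  have "f \<in> borel_measurable (lebesgue_on {0..<1})" "integrable (lebesgue_on {0..<1}) (\<lambda>u. (f u)\<^sup>2)"
    using assms by (simp_all add: L2_01_def set_borel_measurable_restrict_space_iff set_integrable_eq)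
  then show ?thesis
    by (simp add: set_integrable_eq square_integrable_imp_integrable)
qed

lemma L2_01_bounded:
  assumes "set_borel_measurable lebesgue {0..<1} f" "\<And>u. u \<in> {0..<1} \<Longrightarrow> \<bar>f u\<bar> \<le> B"
  shows "L2_01 f"
  unfolding L2_01_def power2_eq_square
proof
  show "set_integrable lebesgue {0..<1} (\<lambda>u. f u * f u)"
    using assms by (intro set_integrable_bounded_mult set_integrable_bounded) auto
qed fact

lemma set_integral_step:
  fixes s a b :: real
  assumes "0 \<le> s" "s \<le> 1"
  shows "(LINT u:{0..<1}|lebesgue. if u < s then a else b) = s * a + (1 - s) * b"
proof -
  have "(\<lambda>u. indicator {0..<1} u *\<^sub>R (if u < s then a else b)) =
      (\<lambda>u. a * indicator {0..<s} u + b * indicator {s..<1::real} u)"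
    using assms by (auto simp: indicator_def fun_eq_iff)
  then show ?thesis
    using assms by (simp add: set_lebesgue_integral_def)
qed

lemma borel_measurable_step:
  "(\<lambda>u::real. if u < s then a else b) \<in> borel_measurable lebesgue"
  by measurable (simp_all add: id_def[symmetric])

lemma Q2_step:
  assumes "0 \<le> a" "a \<le> b"
  shows "(\<lambda>u::real. if u < s then a else b) \<in> Q2"
  unfolding Q2_def
proof (intro CollectI conjI ballI)
  fix u :: real
  have "\<forall>\<^sub>F v in at_right u. (if v < s then a else b) = (if u < s then a else b)"
  proof (cases "u < s")
    case True
    then show ?thesis by (auto simp: eventually_at_right[OF True])
  next
    case False
    show ?thesis
      using eventually_at_right_less[of u] by (rule eventually_mono) (use False in auto)
  qed
  then show "continuous (at_right u) (\<lambda>v::real. if v < s then a else b)"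
    unfolding continuous_within by (rule tendsto_eventually)
  show "u \<in> {0..<1} \<Longrightarrow> 0 \<le> (if u < s then a else b)" using assms by auto
next
  show "mono_on {0..<1} (\<lambda>u::real. if u < s then a else b)"
    using assms by (intro mono_onI) auto
  show "L2_01 (\<lambda>u::real. if u < s then a else b)"
    using assms borel_measurable_step
    by (intro L2_01_bounded[of _ b] borel_measurable_imp_set_borel_measurable) auto
qed

lemma Q2_const: "0 \<le> c \<Longrightarrow> (\<lambda>u. c) \<in> Q2"
  using Q2_step[of c c 0] by simp

lemma Q2_compose:
  assumes q: "q \<in> Q2" and g: "continuous_on {0..} g" "mono_on {0..} g"
    and bound: "\<And>x. 0 \<le> x \<Longrightarrow> 0 \<le> g x \<and> g x \<le> B"
  shows "(\<lambda>u. g (q u)) \<in> Q2"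
proof -
  from q have q0: "\<And>u. u \<in> {0..<1} \<Longrightarrow> 0 \<le> q u" and qm: "mono_on {0..<1} q"
    and qr: "\<And>u. u \<in> {0..<1} \<Longrightarrow> continuous (at_right u) q" and qL: "L2_01 q"
    unfolding Q2_def by auto
  have "continuous (at_right u) (\<lambda>v. g (q v))" if u: "u \<in> {0..<1}" for u
  proof -
    have "\<forall>\<^sub>F v in at_right u. v \<in> {0..<1}"
      using u by (auto simp: eventually_at_right_field intro: exI[of _ 1])
    then have "\<forall>\<^sub>F v in at_right u. q v \<in> {0..}"
      by eventually_elim (use q0 in auto)
    then show ?thesis
      using qr[OF u] q0[OF u] unfolding continuous_within
      by (intro continuous_on_tendsto_compose[OF g(1)]) auto
  qed
  moreover have "mono_on {0..<1} (\<lambda>u. g (q u))"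
    using q0 by (intro mono_onI mono_onD[OF g(2)] mono_onD[OF qm]) auto
  moreover have "L2_01 (\<lambda>u. g (q u))"
  proof (rule L2_01_bounded)
    show "set_borel_measurable lebesgue {0..<1} (\<lambda>u. g (q u))"
      using qL q0 by (intro set_borel_measurable_compose_continuous_on[OF _ _ g(1)])
        (auto simp: L2_01_def)
    show "\<bar>g (q u)\<bar> \<le> B" if "u \<in> {0..<1}" for u
      using bound[OF q0[OF that]] by simp
  qed
  ultimately show ?thesis
    using bound q0 unfolding Q2_def by auto
qed

lemma set_integral_mult_mono_single_crossing:
  fixes p r :: "real \<Rightarrow> real"
  assumes p: "set_integrable M A p" and pr: "set_integrable M A (\<lambda>u. p u * r u)"
    and r: "mono_on A r" and t: "t \<in> A"
    and neg: "\<And>u. u \<in> A \<Longrightarrow> u < t \<Longrightarrow> p u \<le> 0"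
    and pos: "\<And>u. u \<in> A \<Longrightarrow> t \<le> u \<Longrightarrow> 0 \<le> p u"
  shows "r t * (LINT u:A|M. p u) \<le> (LINT u:A|M. p u * r u)"
proof -
  have "p u * r t \<le> p u * r u" if u: "u \<in> A" for u
  proof (cases "u < t")
    case True
    then show ?thesis using neg[OF u] mono_onD[OF r u t] by (intro mult_left_mono_neg) auto
  next
    case False
    then show ?thesis using pos[OF u] mono_onD[OF r t u] by (intro mult_left_mono) auto
  qed
  then have "(LINT u:A|M. p u * r t) \<le> (LINT u:A|M. p u * r u)"
    using p pr by (intro set_integral_mono) auto
  then show ?thesis by (simp add: mult.commute)
qed

lemma single_crossing_in_Q2_dual:
  assumes p: "set_borel_measurable lebesgue {0..<1} p"
    and bound: "\<And>u. u \<in> {0..<1} \<Longrightarrow> \<bar>p u\<bar> \<le> B" and t: "t \<in> {0..<1}"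
    and neg: "\<And>u. u \<in> {0..<1} \<Longrightarrow> u < t \<Longrightarrow> p u \<le> 0"
    and pos: "\<And>u. u \<in> {0..<1} \<Longrightarrow> t \<le> u \<Longrightarrow> 0 \<le> p u"
    and mean: "0 \<le> (LINT u:{0..<1}|lebesgue. p u)"
  shows "p \<in> Q2_dual"
  unfolding Q2_dual_def
proof (intro CollectI conjI ballI)
  show pL: "L2_01 p" using p bound by (rule L2_01_bounded)
  fix r assume "r \<in> Q2"
  then have r0: "0 \<le> r t" and rm: "mono_on {0..<1} r" and rL: "L2_01 r"
    using t unfolding Q2_def by auto
  have "0 \<le> r t * (LINT u:{0..<1}|lebesgue. p u)" using r0 mean by simp
  also have "\<dots> \<le> (LINT u:{0..<1}|lebesgue. p u * r u)"
    using p bound rL pL neg pos t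
    by (intro set_integral_mult_mono_single_crossing[OF _ _ rm t]
        set_integrable_bounded_mult L2_01_imp_set_integrable) auto
  finally show "0 \<le> L2_inner p r" by (simp add: L2_inner_def)
qed

lemma set_integrable_lipschitz_compose:
  fixes f :: "real \<Rightarrow> real"
  assumes f: "L-lipschitz_on S f" and q: "set_integrable M A q" and qS: "q ` A \<subseteq> S"
    and c: "c \<in> S" and A: "A \<in> sets M" "emeasure M A < \<infinity>"
  shows "set_integrable M A (\<lambda>x. f (q x))"
proof (rule set_integrable_bound)
  show "set_integrable M A (\<lambda>x. (\<bar>f c\<bar> + L * \<bar>c\<bar>) + L * \<bar>q x\<bar>)"
    using set_integrable_const[OF A] set_integrable_abs[OF q] by (intro set_integral_add(1)) auto
  have "set_borel_measurable M A q"
    using q by (simp add: set_integrable_def set_borel_measurable_def borel_measurable_integrable)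
  then show "set_borel_measurable M A (\<lambda>x. f (q x))"
    using A(1) lipschitz_on_continuous_on[OF f] qS
    by (rule set_borel_measurable_compose_continuous_on)
  have "norm (f (q x)) \<le> norm ((\<bar>f c\<bar> + L * \<bar>c\<bar>) + L * \<bar>q x\<bar>)" if "x \<in> A" for x
  proof -
    have L0: "0 \<le> L" using lipschitz_on_nonneg[OF f] .
    have "\<bar>f (q x) - f c\<bar> \<le> L * \<bar>q x - c\<bar>"
      using lipschitz_onD[OF f, of "q x" c] qS c that by (auto simp: dist_real_def)
    also have "\<dots> \<le> L * (\<bar>q x\<bar> + \<bar>c\<bar>)"
      using L0 abs_triangle_ineq4[of "q x" c] by (rule mult_left_mono[rotated])
    finally have "\<bar>f (q x)\<bar> \<le> \<bar>f c\<bar> + L * \<bar>c\<bar> + L * \<bar>q x\<bar>"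
      by (simp add: distrib_left)
    moreover have "0 \<le> L * \<bar>c\<bar>" "0 \<le> L * \<bar>q x\<bar>" using L0 by simp_all
    ultimately show ?thesis by simp
  qed
  then show "AE x in M. x \<in> A \<longrightarrow> norm (f (q x)) \<le> norm ((\<bar>f c\<bar> + L * \<bar>c\<bar>) + L * \<bar>q x\<bar>)"
    by (intro AE_I2) auto
qed

lemma convex_on_three_slopes:
  fixes f :: "real \<Rightarrow> real"
  assumes "convex_on I f" "x \<in> I" "y \<in> I" "x < t" "t < y"
  shows "(f t - f x) / (t - x) \<le> (f y - f x) / (y - x)"
    and "(f y - f x) / (y - x) \<le> (f y - f t) / (y - t)"
proof -
  have swap: "(a - b) / (c - d) = (b - a) / (d - c)" for a b c d :: real
    by (metis minus_diff_eq minus_divide_divide)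
  show "(f t - f x) / (t - x) \<le> (f y - f x) / (y - x)"
    using convex_on_slope_le(1)[OF assms] by (simp only: swap[of "f x"] swap[of x])
  show "(f y - f x) / (y - x) \<le> (f y - f t) / (y - t)"
    using convex_on_slope_le(2)[OF assms] by (simp only: swap[of "f x"] swap[of x] swap[of "f t"] swap[of t])
qed

lemma convex_on_difference_quotient_mono:
  fixes f :: "real \<Rightarrow> real"
  assumes f: "convex_on I f" and I: "{x..y + h} \<subseteq> I" and h: "0 < h" and xy: "x \<le> y"
  shows "(f (x + h) - f x) / h \<le> (f (y + h) - f y) / h"
proof (cases "x = y")
  case False
  with xy have "x < y" by simp
  with I h have I': "x \<in> I" "y + h \<in> I" by auto
  have "(f (x + h) - f x) / (x + h - x) \<le> (f (y + h) - f x) / (y + h - x)"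
    using convex_on_three_slopes(1)[OF f I', where t = "x + h"] h \<open>x < y\<close> by simp
  also have "\<dots> \<le> (f (y + h) - f y) / (y + h - y)"
    using convex_on_three_slopes(2)[OF f I', where t = y] h \<open>x < y\<close> by simp
  finally show ?thesis by simp
qed simp

lemma convex_on_above_secant_outside:
  fixes f :: "real \<Rightarrow> real"
  assumes f: "convex_on I f" and I: "x \<in> I" "x + h \<in> I" "y \<in> I" and h: "0 < h"
    and y: "y \<le> x \<or> x + h \<le> y"
  shows "(f (x + h) - f x) / h * (y - x) \<le> f y - f x"
proof -
  consider "y < x" | "y = x" | "y = x + h" | "x + h < y" using y by linarith
  then show ?thesis
  proof cases
    case 1
    have "(f x - f y) / (x - y) \<le> (f (x + h) - f y) / (x + h - y)"
      using convex_on_three_slopes(1)[OF f I(3,2), where t = x] h 1 by simp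
    also have "\<dots> \<le> (f (x + h) - f x) / (x + h - x)"
      using convex_on_three_slopes(2)[OF f I(3,2), where t = x] h 1 by simp
    finally have "f x - f y \<le> (f (x + h) - f x) / h * (x - y)"
      using 1 by (simp add: divide_le_eq)
    also have "\<dots> = - ((f (x + h) - f x) / h * (y - x))"
      by (metis minus_diff_eq mult_minus_right)
    finally show ?thesis by linarith
  next
    case 4
    have "(f (x + h) - f x) / (x + h - x) \<le> (f y - f x) / (y - x)"
      using convex_on_three_slopes(1)[OF f I(1,3), where t = "x + h"] h 4 by simp
    then show ?thesis using 4 h by (simp add: le_divide_eq)
  qed (use h in simp_all)
qed

lemma mono_lipschitz_difference_quotient_bounds:
  fixes f :: "real \<Rightarrow> real"
  assumes f: "L-lipschitz_on I f" "mono_on I f" and I: "x \<in> I" "x + h \<in> I" and h: "0 < h"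
  shows "0 \<le> (f (x + h) - f x) / h" and "(f (x + h) - f x) / h \<le> L"
proof -
  show "0 \<le> (f (x + h) - f x) / h"
    using mono_onD[OF f(2) I] h by simp
  have "\<bar>f (x + h) - f x\<bar> \<le> L * h"
    using lipschitz_onD[OF f(1) I(2,1)] h by (simp add: dist_real_def)
  then show "(f (x + h) - f x) / h \<le> L"
    using h by (simp add: divide_le_eq)
qed

lemma convex_mono_lipschitz_above_secant:
  fixes f :: "real \<Rightarrow> real"
  assumes f: "L-lipschitz_on I f" "mono_on I f" "convex_on I f"
    and I: "x \<in> I" "x + h \<in> I" "y \<in> I" and h: "0 < h"
  shows "(f (x + h) - f x) / h * (y - x) - L * h \<le> f y - f x"
proof (cases "y \<le> x \<or> x + h \<le> y")
  case True
  moreover have "0 \<le> L * h" using lipschitz_on_nonneg[OF f(1)] h by simp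
  ultimately show ?thesis using convex_on_above_secant_outside[OF f(3) I h] by linarith
next
  case False
  then have "(f (x + h) - f x) / h * (y - x) \<le> L * h"
    using mono_lipschitz_difference_quotient_bounds[OF f(1,2) I(1,2) h] lipschitz_on_nonneg[OF f(1)]
    by (intro mult_mono) auto
  moreover have "f x \<le> f y" using mono_onD[OF f(2) I(1,3)] False by simp
  ultimately show ?thesis by simp
qed

lemma Q2_dual_nondecreasingI:
  "(\<And>q q'. q \<in> Q2 \<Longrightarrow> q' \<in> Q2 \<Longrightarrow> (\<lambda>u. q' u - q u) \<in> Q2_dual \<Longrightarrow> g q \<le> g q')
    \<Longrightarrow> Q2_dual_nondecreasing g"
  by (simp add: Q2_dual_nondecreasing_def)

lemma Q2_dual_nondecreasingD:
  "Q2_dual_nondecreasing g \<Longrightarrow> q \<in> Q2 \<Longrightarrow> q' \<in> Q2 \<Longrightarrow> (\<lambda>u. q' u - q u) \<in> Q2_dual \<Longrightarrow> g q \<le> g q'"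
  by (simp add: Q2_dual_nondecreasing_def)

lemma Q2_dual_nondecreasing_imp_mono_on:
  assumes nd: "Q2_dual_nondecreasing (\<lambda>q. LINT u:{0..<1}|lebesgue. chi (q u))"
  shows "mono_on {0..} chi"
proof (rule mono_onI)
  fix x y :: real assume xy: "x \<in> {0..}" "y \<in> {0..}" "x \<le> y"
  have "(\<lambda>u::real. y - x) \<in> Q2_dual"
    using xy by (intro single_crossing_in_Q2_dual[where B = "y - x" and t = 0]
        borel_measurable_imp_set_borel_measurable) (auto simp: set_integral_const)
  then have "(LINT u:{0..<1::real}|lebesgue. chi x) \<le> (LINT u:{0..<1::real}|lebesgue. chi y)"
    using Q2_dual_nondecreasingD[OF nd, of "\<lambda>u. x" "\<lambda>u. y"] Q2_const xy by simp
  then show "chi x \<le> chi y" by (simp add: set_integral_const)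
qed

lemma Q2_dual_nondecreasing_imp_convex_on:
  assumes nd: "Q2_dual_nondecreasing (\<lambda>q. LINT u:{0..<1}|lebesgue. chi (q u))"
  shows "convex_on {0..} chi"
proof (rule convex_on_linorderI)
  fix t x y :: real assume t: "0 < t" "t < 1" and xy: "x \<in> {0..}" "y \<in> {0..}" "x < y"
  define s where "s = 1 - t"
  define c where "c = (1 - t) * x + t * y"
  have s: "0 \<le> s" "s \<le> 1" "s \<in> {0..<1}" using t by (auto simp: s_def)
  have "x - c \<le> 0" "0 \<le> y - c"
    using t xy mult_left_mono[of x y t] mult_left_mono[of x y "1 - t"]
    by (auto simp: c_def algebra_simps)
  moreover have "(LINT u:{0..<1}|lebesgue. if u < s then x - c else y - c) = 0"
    using s by (simp add: set_integral_step) (simp add: c_def s_def algebra_simps)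
  ultimately have "(\<lambda>u::real. if u < s then x - c else y - c) \<in> Q2_dual"
    using s borel_measurable_step[of s]
    by (intro single_crossing_in_Q2_dual[where B = "\<bar>x - c\<bar> + \<bar>y - c\<bar>" and t = s]
        borel_measurable_imp_set_borel_measurable) auto
  also have "(\<lambda>u::real. if u < s then x - c else y - c) = (\<lambda>u. (if u < s then x else y) - c)"
    by auto
  finally have "(LINT u:{0..<1::real}|lebesgue. chi c)
      \<le> (LINT u:{0..<1}|lebesgue. chi (if u < s then x else y))"
    using Q2_dual_nondecreasingD[OF nd, of "\<lambda>u. c" "\<lambda>u. if u < s then x else y"]
      Q2_step[of x y s] Q2_const[of c] xy t by (simp add: c_def)
  also have "\<dots> = (LINT u:{0..<1}|lebesgue. if u < s then chi x else chi y)"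
    by (simp add: if_distrib)
  finally show "chi ((1 - t) *\<^sub>R x + t *\<^sub>R y) \<le> (1 - t) * chi x + t * chi y"
    using s by (simp add: set_integral_const set_integral_step c_def s_def)
qed (rule convex_real_interval)

lemma set_integral_compose_le_Q2_dual_error:
  fixes chi :: "real \<Rightarrow> real"
  assumes chi: "L-lipschitz_on {0..} chi" "mono_on {0..} chi" "convex_on {0..} chi"
    and q: "q \<in> Q2" and q': "q' \<in> Q2" and p: "(\<lambda>u. q' u - q u) \<in> Q2_dual" and h: "0 < h"
  shows "(LINT u:{0..<1}|lebesgue. chi (q u)) \<le> (LINT u:{0..<1}|lebesgue. chi (q' u)) + L * h"
proof -
  \<comment> \<open>The right derivative of chi would make the error L h vanish, but composed with q it
    need not be right-continuous; the difference quotient is continuous, so g o q stays in Q2.\<close>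
  define g where "g x = (chi (x + h) - chi x) / h" for x
  from q q' have q0: "\<And>u. u \<in> {0..<1} \<Longrightarrow> 0 \<le> q u \<and> 0 \<le> q' u"
    and qL: "L2_01 q" "L2_01 q'" unfolding Q2_def by auto
  have g_bounds: "0 \<le> g x \<and> g x \<le> L" if "0 \<le> x" for x
    using mono_lipschitz_difference_quotient_bounds[OF chi(1,2)] that h by (simp add: g_def)
  have "(\<lambda>u. g (q u)) \<in> Q2"
  proof (rule Q2_compose[OF q _ _ g_bounds])
    have "continuous_on {0..} (\<lambda>x. chi (x + h))"
      using h by (intro continuous_on_compose2[OF lipschitz_on_continuous_on[OF chi(1)]]
          continuous_intros) auto
    then show "continuous_on {0..} g"
      using h unfolding g_def by (intro continuous_intros lipschitz_on_continuous_on[OF chi(1)]) auto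
    show "mono_on {0..} g"
      using h by (auto intro!: mono_onI convex_on_difference_quotient_mono[OF chi(3)] simp: g_def)
  qed
  then have gq: "set_borel_measurable lebesgue {0..<1} (\<lambda>u. g (q u))"
    and inner: "0 \<le> (LINT u:{0..<1}|lebesgue. (q' u - q u) * g (q u))"
    using p unfolding Q2_def Q2_dual_def L2_01_def L2_inner_def by auto
  have int_chi: "set_integrable lebesgue {0..<1} (\<lambda>u. chi (Q u))" if "Q \<in> Q2" for Q
  proof (rule set_integrable_lipschitz_compose[OF chi(1), where c = 0])
    show "set_integrable lebesgue {0..<1} Q"
      using that by (intro L2_01_imp_set_integrable) (simp add: Q2_def)
    show "Q ` {0..<1} \<subseteq> {0..}"
      using that by (auto simp: Q2_def)
  qed auto
  have int_inner: "set_integrable lebesgue {0..<1} (\<lambda>u. (q' u - q u) * g (q u))"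
    using set_integrable_bounded_mult[OF _ gq, of "\<lambda>u. q' u - q u" L] p q0 g_bounds
    by (auto simp: Q2_dual_def mult.commute intro: L2_01_imp_set_integrable)
  have int_Lh: "set_integrable lebesgue {0..<1::real} (\<lambda>u. L * h)"
    by (rule set_integrable_const) auto
  have "(LINT u:{0..<1}|lebesgue. chi (q u)) + (LINT u:{0..<1}|lebesgue. (q' u - q u) * g (q u))
      = (LINT u:{0..<1}|lebesgue. chi (q u) + (q' u - q u) * g (q u))"
    using int_chi[OF q] int_inner by (simp add: set_integral_add)
  also have "\<dots> \<le> (LINT u:{0..<1}|lebesgue. chi (q' u) + L * h)"
  proof (rule set_integral_mono)
    fix u :: real assume "u \<in> {0..<1}"
    then have "g (q u) * (q' u - q u) - L * h \<le> chi (q' u) - chi (q u)"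
      unfolding g_def using q0 h by (intro convex_mono_lipschitz_above_secant[OF chi]) auto
    then show "chi (q u) + (q' u - q u) * g (q u) \<le> chi (q' u) + L * h"
      by (simp add: algebra_simps)
  qed (use int_chi[OF q] int_chi[OF q'] int_inner int_Lh in simp_all)
  also have "\<dots> = (LINT u:{0..<1}|lebesgue. chi (q' u)) + L * h"
    using int_chi[OF q'] int_Lh by (simp add: set_integral_add set_integral_const)
  finally show ?thesis using inner by linarith
qed

lemma mono_convex_imp_Q2_dual_nondecreasing:
  fixes chi :: "real \<Rightarrow> real"
  assumes chi: "L-lipschitz_on {0..} chi" "mono_on {0..} chi" "convex_on {0..} chi"
  shows "Q2_dual_nondecreasing (\<lambda>q. LINT u:{0..<1}|lebesgue. chi (q u))"
proof (rule Q2_dual_nondecreasingI, rule field_le_epsilon)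
  fix q q' :: "real \<Rightarrow> real" and e :: real
  assume "q \<in> Q2" "q' \<in> Q2" "(\<lambda>u. q' u - q u) \<in> Q2_dual" "0 < e"
  moreover have "L * (e / (L + 1)) \<le> e"
    using lipschitz_on_nonneg[OF chi(1)] \<open>0 < e\<close> by (simp add: field_simps)
  ultimately show "(LINT u:{0..<1}|lebesgue. chi (q u)) \<le> (LINT u:{0..<1}|lebesgue. chi (q' u)) + e"
    using set_integral_compose_le_Q2_dual_error[OF chi, of q q' "e / (L + 1)"] lipschitz_on_nonneg[OF chi(1)]
    by fastforce
qed

theorem proposition4p4:
  fixes chi :: "real \<Rightarrow> real"
  assumes "\<exists>L. L-lipschitz_on {0..} chi"
  shows "Q2_dual_nondecreasing (\<lambda>q. LINT u:{0..<1}|lebesgue. chi (q u))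
         \<longleftrightarrow> (mono_on {0..} chi \<and> convex_on {0..} chi)"
proof -
  obtain L where "L-lipschitz_on {0..} chi" using assms by blast
  then show ?thesis
    using Q2_dual_nondecreasing_imp_mono_on Q2_dual_nondecreasing_imp_convex_on
      mono_convex_imp_Q2_dual_nondecreasing by blast
qed

end
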